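(* Let $(G,\cdot)$ be a loop with identity $e$ and let $(H,\cdot)$ be a non-trivial subloop of $G$ such that $(xs\cdot z)s=x(sz\cdot s)$ for all $x,z\in G$ and $s\in H$. Then $R_{s^n}=R_s^n$ for all $s\in H$ and $n\in\mathbb{Z}$; that is, $xs^n=(\cdots((xs)s)\cdots)s$ ($n$ factors $s$) for all $x\in G$, $s\in H$.
   Context: Juxtaposition binds more tightly than $\cdot$. $R_s:G\to G$ is the right translation $xR_s=x\cdot s$. For $s\in H$ the left and right inverses coincide; call it $s^{-1}$. Powers: $s^0=e$, $s^n=s^{n-1}\cdot s$ for $n>0$, $s^n=(s^{-1})^{|n|}$ for $n<0$; $R_s^n$ is the $n$-th power of the permutation $R_s$ in the symmetric group of $G$. *)

theory Defs
  imports Main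
begin

definition loop :: "'a set \<Rightarrow> ('a \<Rightarrow> 'a \<Rightarrow> 'a) \<Rightarrow> 'a \<Rightarrow> bool" where
  "loop G m e \<longleftrightarrow>
     e \<in> G \<and>
     (\<forall>x\<in>G. \<forall>y\<in>G. m x y \<in> G) \<and>
     (\<forall>x\<in>G. m e x = x \<and> m x e = x) \<and>
     (\<forall>a\<in>G. \<forall>b\<in>G. \<exists>!x. x \<in> G \<and> m a x = b) \<and>
     (\<forall>a\<in>G. \<forall>b\<in>G. \<exists>!y. y \<in> G \<and> m y a = b)"

definition subloop :: "'a set \<Rightarrow> 'a set \<Rightarrow> ('a \<Rightarrow> 'a \<Rightarrow> 'a) \<Rightarrow> 'a \<Rightarrow> bool" where
  "subloop H G m e \<longleftrightarrow> H \<subseteq> G \<and> loop H m e"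

definition rtrans :: "('a \<Rightarrow> 'a \<Rightarrow> 'a) \<Rightarrow> 'a \<Rightarrow> 'a \<Rightarrow> 'a" where
  "rtrans m s = (\<lambda>x. m x s)"

definition linv :: "'a set \<Rightarrow> ('a \<Rightarrow> 'a \<Rightarrow> 'a) \<Rightarrow> 'a \<Rightarrow> 'a \<Rightarrow> 'a" where
  "linv G m e s = (THE x. x \<in> G \<and> m s x = e)"

primrec npow :: "('a \<Rightarrow> 'a \<Rightarrow> 'a) \<Rightarrow> 'a \<Rightarrow> 'a \<Rightarrow> nat \<Rightarrow> 'a" where
  "npow m e s 0 = e"
| "npow m e s (Suc n) = m (npow m e s n) s"

definition ipow :: "'a set \<Rightarrow> ('a \<Rightarrow> 'a \<Rightarrow> 'a) \<Rightarrow> 'a \<Rightarrow> 'a \<Rightarrow> int \<Rightarrow> 'a" where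
  "ipow G m e s n = (if 0 \<le> n then npow m e s (nat n) else npow m e (linv G m e s) (nat (- n)))"

definition Rpow :: "'a set \<Rightarrow> ('a \<Rightarrow> 'a \<Rightarrow> 'a) \<Rightarrow> 'a \<Rightarrow> int \<Rightarrow> 'a \<Rightarrow> 'a" where
  "Rpow G m s n = (if 0 \<le> n then rtrans m s ^^ nat n else inv_into G (rtrans m s) ^^ nat (- n))"

end

theory Submission
  imports Defs
begin

text \<open>
  For s satisfying (xs\<cdot>z)s = x(sz\<cdot>s), induction on n gives x s^n = (R_s)^n x: with
  z = s^j the identity turns x(s s^j\<cdot>s) into (xs\<cdot>s^j)s, and s s^j = s^(j+1) is the
  induction hypothesis at x = s. For negative exponents, the identity with z = s^-1 shows that
  R_(s^-1) inverts R_s; as H is a subloop, s^-1 lies in H and satisfies the identity too, so the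
  positive case applies to it.
\<close>

definition right_bol_element :: "'a set \<Rightarrow> ('a \<Rightarrow> 'a \<Rightarrow> 'a) \<Rightarrow> 'a \<Rightarrow> bool" where
  "right_bol_element G m s \<longleftrightarrow> (\<forall>x\<in>G. \<forall>z\<in>G. m (m (m x s) z) s = m x (m (m s z) s))"

lemma npow_eq_funpow: "npow m e s n = (rtrans m s ^^ n) e"
  by (induction n) (auto simp: rtrans_def)

lemma npow_closed: "loop G m e \<Longrightarrow> s \<in> G \<Longrightarrow> npow m e s n \<in> G"
  by (induction n) (auto simp: loop_def)

lemma funpow_cong_on:
  assumes "\<And>x. x \<in> G \<Longrightarrow> f x = g x" and "\<And>x. x \<in> G \<Longrightarrow> f x \<in> G" and "x \<in> G"
  shows "(f ^^ n) x = (g ^^ n) x"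
proof -
  have "(f ^^ n) x = (g ^^ n) x \<and> (f ^^ n) x \<in> G"
    using assms by (induction n) auto
  then show ?thesis ..
qed

lemma loop_inj_on_rtrans:
  assumes "loop G m e" and "s \<in> G"
  shows "inj_on (rtrans m s) G"
proof (rule inj_onI)
  fix y1 y2 assume y: "y1 \<in> G" "y2 \<in> G" and eq: "rtrans m s y1 = rtrans m s y2"
  have "\<exists>!y. y \<in> G \<and> m y s = m y1 s"
    using assms y by (simp add: loop_def)
  then show "y1 = y2" using y eq by (auto simp: rtrans_def)
qed

lemma right_bol_element_mult_npow:
  assumes L: "loop G m e" and s: "s \<in> G" and bol: "right_bol_element G m s"
  shows "x \<in> G \<Longrightarrow> m x (npow m e s n) = (rtrans m s ^^ n) x"
proof (induction n arbitrary: x rule: less_induct)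
  case (less n)
  have unit: "\<And>y. y \<in> G \<Longrightarrow> m y e = y" and closed: "\<And>y. y \<in> G \<Longrightarrow> m y s \<in> G"
    using L s by (auto simp: loop_def)
  consider "n = 0" | "n = 1" | j where "n = Suc (Suc j)"
    by (metis One_nat_def not0_implies_Suc)
  then show ?case
  proof cases
    case 1
    then show ?thesis using unit less.prems by simp
  next
    case 2
    then show ?thesis using unit L s by (simp add: rtrans_def loop_def)
  next
    case (3 j)
    have IH: "\<And>y. y \<in> G \<Longrightarrow> m y (npow m e s j) = (rtrans m s ^^ j) y"
      using less.IH 3 by simp
    have "m s (npow m e s j) = (rtrans m s ^^ j) (rtrans m s e)"
      using IH s L by (simp add: rtrans_def loop_def)
    also have "\<dots> = npow m e s (Suc j)"
      by (simp add: npow_eq_funpow funpow_swap1)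
    finally have s_npow: "m s (npow m e s j) = npow m e s (Suc j)" .
    have "m x (npow m e s n) = m x (m (m s (npow m e s j)) s)"
      using 3 s_npow by simp
    also have "\<dots> = m (m (m x s) (npow m e s j)) s"
      using bol less.prems npow_closed[OF L s] by (simp add: right_bol_element_def)
    also have "\<dots> = rtrans m s ((rtrans m s ^^ j) (rtrans m s x))"
      using IH closed less.prems by (simp add: rtrans_def)
    also have "\<dots> = (rtrans m s ^^ n) x"
      using 3 by (simp add: funpow_swap1)
    finally show ?thesis using less.prems by simp
  qed
qed

lemma right_bol_element_inv_into_rtrans:
  assumes L: "loop G m e" and s: "s \<in> G" and bol: "right_bol_element G m s"
    and t: "t \<in> G" and st: "m s t = e" and y: "y \<in> G"
  shows "inv_into G (rtrans m s) y = m y t"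
proof -
  have "\<exists>!w. w \<in> G \<and> m w s = y"
    using L s y by (simp add: loop_def)
  then obtain w where w: "w \<in> G" "m w s = y" by blast
  have "m (m y t) s = m w (m (m s t) s)"
    using bol w t by (auto simp: right_bol_element_def)
  also have "\<dots> = y"
    using st w L s by (simp add: loop_def)
  finally have "rtrans m s (m y t) = y" by (simp add: rtrans_def)
  moreover have "m y t \<in> G" using L y t by (simp add: loop_def)
  ultimately show ?thesis
    using inv_into_f_f[OF loop_inj_on_rtrans[OF L s]] by metis
qed

lemma subloop_linv:
  assumes L: "loop G m e" and sub: "subloop H G m e" and s: "s \<in> H"
  shows "linv G m e s \<in> H" and "m s (linv G m e s) = e"
proof -
  have HG: "H \<subseteq> G" and LH: "loop H m e" using sub by (auto simp: subloop_def)
  have "\<exists>!t. t \<in> H \<and> m s t = e"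
    using LH s by (simp add: loop_def)
  then obtain t where t: "t \<in> H" "m s t = e" by blast
  have "\<forall>a\<in>G. \<forall>b\<in>G. \<exists>!x. x \<in> G \<and> m a x = b" and "e \<in> G"
    using L by (simp_all add: loop_def)
  then have "\<exists>!x. x \<in> G \<and> m s x = e"
    using s HG by blast
  then have "linv G m e s = t"
    unfolding linv_def using t HG by (auto intro: the1_equality)
  then show "linv G m e s \<in> H" and "m s (linv G m e s) = e" using t by simp_all
qed

theorem corollary3p1:
  fixes G H :: "'a set" and m :: "'a \<Rightarrow> 'a \<Rightarrow> 'a" and e :: 'a
  assumes "loop G m e"
    and "subloop H G m e"
    and "H \<noteq> {e}"
    and "\<forall>x\<in>G. \<forall>z\<in>G. \<forall>s\<in>H. m (m (m x s) z) s = m x (m (m s z) s)"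
  shows "\<forall>s\<in>H. \<forall>n::int. \<forall>x\<in>G. rtrans m (ipow G m e s n) x = Rpow G m s n x"
proof (intro ballI allI)
  fix s n x assume s: "s \<in> H" and x: "x \<in> G"
  have HG: "H \<subseteq> G" using assms(2) by (simp add: subloop_def)
  have bol: "\<And>u. u \<in> H \<Longrightarrow> right_bol_element G m u"
    using assms(4) by (simp add: right_bol_element_def)
  define t where "t = linv G m e s"
  have t: "t \<in> H" "m s t = e" using subloop_linv[OF assms(1,2) s] by (simp_all add: t_def)
  show "rtrans m (ipow G m e s n) x = Rpow G m s n x"
  proof (cases "0 \<le> n")
    case True
    then show ?thesis using right_bol_element_mult_npow[OF assms(1) _ bol] s HG x
      by (auto simp: ipow_def Rpow_def rtrans_def)
  next
    case False
    have "rtrans m (ipow G m e s n) x = (rtrans m t ^^ nat (- n)) x"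
      using right_bol_element_mult_npow[OF assms(1) _ bol[OF t(1)]] t HG x False
      by (auto simp: ipow_def rtrans_def t_def)
    also have "\<dots> = (inv_into G (rtrans m s) ^^ nat (- n)) x"
    proof (rule funpow_cong_on[where G = G])
      fix y assume y: "y \<in> G"
      have "s \<in> G" "t \<in> G" using s t HG by auto
      from right_bol_element_inv_into_rtrans[OF assms(1) this(1) bol[OF s] this(2) t(2) y]
      show "rtrans m t y = inv_into G (rtrans m s) y"
        by (simp add: rtrans_def)
      show "rtrans m t y \<in> G"
        using assms(1) y t HG by (auto simp: rtrans_def loop_def)
    qed (rule x)
    finally show ?thesis using False by (simp add: Rpow_def)
  qed
qed

end
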